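(* Let $A\in\mathbb{R}^{n\times n}$ be Hurwitz, $B\in\mathbb{R}^{n\times m}$, $C\in\mathbb{R}^{p\times n}$, $\hat A\in\mathbb{R}^{r\times r}$, $\hat B\in\mathbb{R}^{r\times m}$, $\hat C\in\mathbb{R}^{p\times r}$, $\bar T>0$. Let $P_{\bar T}, P_{2, \bar T}$ and $\hat P_{\bar T}$ be the solutions to $$A P_{\bar T}+ P_{\bar T} A^T =-B B^T+e^{A \bar T}B B^T e^{A^T \bar T},\quad A P_{2, {\bar T}}+ P_{2, {\bar T}} \hat A^T =-B \hat B^T+e^{A \bar T}B \hat B^T e^{\hat A^T \bar T},$$ $$\hat A \hat P_{\bar T}+\hat P_{\bar T} \hat A^T =-\hat B \hat B^T+e^{\hat A \bar T}\hat B \hat B^T e^{\hat A^T \bar T},$$ respectively. Then $$\operatorname{tr}(C P_{\bar T} C^T)=\operatorname{tr}(B^T Q_{\bar T} B),\quad \operatorname{tr}(\hat C \hat P_{\bar T} \hat C^T)=\operatorname{tr}(\hat B^T \hat Q_{\bar T} \hat B),\quad \operatorname{tr}(C P_{2, \bar T} \hat C^T)=\operatorname{tr}(\hat B^T Q_{2, \bar T} B),$$ where the matrices $Q_{\bar T}, Q_{2, \bar T}$ and $\hat Q_{\bar T}$ satisfy $$A^T Q_{\bar T}+ Q_{\bar T} A =-C^T C+e^{A^T \bar T}C^T C e^{A \bar T},\quad \hat A^T Q_{2, {\bar T}}+ Q_{2, {\bar T}} A =-\hat C^T C+e^{\hat A^T \bar T} \hat C^T C e^{A \bar T},$$ $$\hat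 A^T \hat Q_{\bar T}+\hat Q_{\bar T} \hat A =-\hat C^T \hat C+e^{\hat A^T \bar T}\hat C^T \hat C e^{\hat A \bar T}.$$
   Context: $\operatorname{tr}$ denotes the trace of a matrix. *)

theory Defs
  imports "HOL-Analysis.Analysis"
begin

primrec matpow :: "real^'n^'n \<Rightarrow> nat \<Rightarrow> real^'n^'n" where
  "matpow M 0 = mat 1"
| "matpow M (Suc k) = M ** matpow M k"

definition mat_exp :: "real \<Rightarrow> real^'n^'n \<Rightarrow> real^'n^'n" where
  "mat_exp t M = (\<Sum>k. (t ^ k / fact k) *\<^sub>R matpow M k)"

definition hurwitz :: "real^'n^'n \<Rightarrow> bool" where
  "hurwitz M \<longleftrightarrow>
     (\<forall>z::complex. det ((\<chi> i j. (if i = j then z else 0) - complex_of_real (M $ i $ j)) :: complex^'n^'n) = 0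
        \<longrightarrow> Re z < 0)"

end

theory Submission
  imports Defs
begin

text \<open>Write \<open>L X = A X + X F\<close> for the Sylvester operator with \<open>F = \<hat>A\<^sup>T\<close>.
  Unique solvability of one equation \<open>L X = R\<close> makes \<open>L\<close> injective, hence invertible, so
  \<open>L P\<^sub>0 = -W\<close> has a solution, where \<open>W = B \<hat>B\<^sup>T\<close>. Since \<open>E = e\<^bsup>AT\<^esup>\<close> commutes with \<open>A\<close>
  and \<open>G = e\<^bsup>\<hat>A\<^sup>TT\<^esup>\<close> with \<open>F\<close>, conjugation by \<open>E, G\<close> commutes with \<open>L\<close>, and uniqueness
  gives \<open>P = P\<^sub>0 - E P\<^sub>0 G\<close>. The identity \<open>tr(Q L X) = tr((F Q + Q A) X)\<close> moves \<open>L\<close> onto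
  \<open>Q\<close>, whose equation turns \<open>tr(Q W) = -tr(Q L P\<^sub>0)\<close> into \<open>tr(V (P\<^sub>0 - E P\<^sub>0 G))\<close> with
  \<open>V = \<hat>C\<^sup>T C\<close>. This is the mixed identity; the other two are its instances
  \<open>(\<hat>A, \<hat>B, \<hat>C) = (A, B, C)\<close> and \<open>(A, B, C) = (\<hat>A, \<hat>B, \<hat>C)\<close>.\<close>

lemma matrix_add_rdistrib: "((X::real^'a^'b) + Y) ** (Z::real^'c^'a) = X ** Z + Y ** Z"
  by (simp add: matrix_matrix_mult_def vec_eq_iff sum.distrib algebra_simps)

lemma matrix_diff_ldistrib: "(Z::real^'a^'b) ** ((X::real^'c^'a) - Y) = Z ** X - Z ** Y"
  by (simp add: matrix_matrix_mult_def vec_eq_iff sum_subtractf algebra_simps)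

lemma matrix_diff_rdistrib: "((X::real^'a^'b) - Y) ** (Z::real^'c^'a) = X ** Z - Y ** Z"
  by (simp add: matrix_matrix_mult_def vec_eq_iff sum_subtractf algebra_simps)

lemma matrix_neg_left: "(- (X::real^'a^'b)) ** (Z::real^'c^'a) = - (X ** Z)"
  by (simp add: matrix_matrix_mult_def vec_eq_iff sum_negf)

lemma matrix_neg_right: "(Z::real^'a^'b) ** (- (X::real^'c^'a)) = - (Z ** X)"
  by (simp add: matrix_matrix_mult_def vec_eq_iff sum_negf)

lemma trace_neg: "trace (- (X::real^'a^'a)) = - trace X"
  by (simp add: trace_def sum_negf)

lemma trace_mul_cyclic:
  "trace ((X::real^'a^'b) ** (Y::real^'c^'a) ** (Z::real^'b^'c)) = trace (Z ** X ** Y)"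
  by (metis matrix_mul_assoc trace_mul_sym)

lemma bounded_linear_matrix_mult_left: "bounded_linear (\<lambda>X::real^'c^'a. (M::real^'a^'b) ** X)"
  unfolding linear_conv_bounded_linear[symmetric]
  by (rule linearI) (simp_all add: matrix_add_ldistrib matrix_scalar_ac scalar_matrix_assoc)

lemma bounded_linear_matrix_mult_right: "bounded_linear (\<lambda>X::real^'a^'b. X ** (M::real^'c^'a))"
  unfolding linear_conv_bounded_linear[symmetric]
  by (rule linearI) (simp_all add: matrix_add_rdistrib scalar_matrix_assoc)

definition entry_abs_sum :: "real^'a^'b \<Rightarrow> real" where
  "entry_abs_sum X = (\<Sum>i\<in>UNIV. \<Sum>j\<in>UNIV. \<bar>X$i$j\<bar>)"

lemma entry_abs_sum_nonneg: "0 \<le> entry_abs_sum X"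
  unfolding entry_abs_sum_def by (auto intro!: sum_nonneg)

lemma row_abs_sum_le_entry_abs_sum: "(\<Sum>j\<in>UNIV. \<bar>X$k$j\<bar>) \<le> entry_abs_sum X"
  unfolding entry_abs_sum_def by (rule member_le_sum) (auto intro: sum_nonneg)

lemma entry_abs_sum_mult:
  "entry_abs_sum ((X::real^'a^'b) ** (Y::real^'c^'a)) \<le> entry_abs_sum X * entry_abs_sum Y"
proof -
  have "entry_abs_sum (X ** Y) = (\<Sum>i\<in>UNIV. \<Sum>j\<in>UNIV. \<bar>\<Sum>k\<in>UNIV. X$i$k * Y$k$j\<bar>)"
    by (simp add: entry_abs_sum_def matrix_matrix_mult_def)
  also have "\<dots> \<le> (\<Sum>i\<in>UNIV. \<Sum>j\<in>UNIV. \<Sum>k\<in>UNIV. \<bar>X$i$k\<bar> * \<bar>Y$k$j\<bar>)"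
    by (intro sum_mono order_trans[OF sum_abs]) (simp add: abs_mult)
  also have "\<dots> = (\<Sum>i\<in>UNIV. \<Sum>k\<in>UNIV. \<bar>X$i$k\<bar> * (\<Sum>j\<in>UNIV. \<bar>Y$k$j\<bar>))"
    by (simp add: sum_distrib_left sum.swap[of _ "UNIV::'c set"])
  also have "\<dots> \<le> (\<Sum>i\<in>UNIV. \<Sum>k\<in>UNIV. \<bar>X$i$k\<bar> * entry_abs_sum Y)"
    by (intro sum_mono mult_left_mono row_abs_sum_le_entry_abs_sum) auto
  also have "\<dots> = entry_abs_sum X * entry_abs_sum Y"
    by (simp add: entry_abs_sum_def sum_distrib_right)
  finally show ?thesis .
qed

lemma norm_le_entry_abs_sum: "norm (X::real^'a^'b) \<le> entry_abs_sum X"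
proof -
  have "norm X \<le> (\<Sum>i\<in>UNIV. norm (X$i))"
    unfolding norm_vec_def by (rule L2_set_le_sum) auto
  also have "\<dots> \<le> (\<Sum>i\<in>UNIV. \<Sum>j\<in>UNIV. \<bar>X$i$j\<bar>)"
    by (intro sum_mono) (simp add: norm_le_l1_cart)
  finally show ?thesis by (simp add: entry_abs_sum_def)
qed

lemma entry_abs_sum_matpow:
  "entry_abs_sum (matpow M k) \<le> entry_abs_sum (mat 1 :: real^'a^'a) * entry_abs_sum (M::real^'a^'a) ^ k"
proof (induction k)
  case 0
  then show ?case by simp
next
  case (Suc k)
  have "entry_abs_sum (matpow M (Suc k)) \<le> entry_abs_sum M * entry_abs_sum (matpow M k)"
    using entry_abs_sum_mult by simp
  also have "\<dots> \<le> entry_abs_sum M * (entry_abs_sum (mat 1 :: real^'a^'a) * entry_abs_sum M ^ k)"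
    by (intro mult_left_mono Suc entry_abs_sum_nonneg)
  finally show ?case by (simp add: algebra_simps)
qed

lemma summable_mat_exp: "summable (\<lambda>k. (t ^ k / fact k) *\<^sub>R matpow (M::real^'a^'a) k)"
proof (rule summable_comparison_test)
  let ?c = "entry_abs_sum (mat 1 :: real^'a^'a)" and ?m = "entry_abs_sum M"
  show "summable (\<lambda>k. ?c * (inverse (fact k) * (\<bar>t\<bar> * ?m) ^ k))"
    by (intro summable_mult summable_exp)
  have "norm ((t ^ k / fact k) *\<^sub>R matpow M k) \<le> ?c * (inverse (fact k) * (\<bar>t\<bar> * ?m) ^ k)"
    for k
  proof -
    have "norm ((t ^ k / fact k) *\<^sub>R matpow M k) = \<bar>t\<bar> ^ k / fact k * norm (matpow M k)"
      by (simp add: power_abs)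
    also have "\<dots> \<le> \<bar>t\<bar> ^ k / fact k * (?c * ?m ^ k)"
      by (intro mult_left_mono order_trans[OF norm_le_entry_abs_sum entry_abs_sum_matpow]) auto
    finally show ?thesis by (simp add: field_simps)
  qed
  then show "\<exists>N. \<forall>k\<ge>N. norm ((t ^ k / fact k) *\<^sub>R matpow M k)
      \<le> ?c * (inverse (fact k) * (\<bar>t\<bar> * ?m) ^ k)"
    by blast
qed

lemma matpow_commute: "M ** matpow M k = matpow M k ** (M::real^'a^'a)"
  by (induction k) (simp_all add: matrix_mul_assoc)

lemma mat_exp_commute: "M ** mat_exp t M = mat_exp t M ** (M::real^'a^'a)"
proof -
  have "M ** mat_exp t M = (\<Sum>k. M ** ((t ^ k / fact k) *\<^sub>R matpow M k))"
    unfolding mat_exp_def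
    by (rule bounded_linear.suminf[OF bounded_linear_matrix_mult_left summable_mat_exp])
  also have "\<dots> = (\<Sum>k. ((t ^ k / fact k) *\<^sub>R matpow M k) ** M)"
    by (simp add: matrix_scalar_ac scalar_matrix_assoc[symmetric] matpow_commute)
  also have "\<dots> = mat_exp t M ** M"
    unfolding mat_exp_def
    by (rule bounded_linear.suminf[OF bounded_linear_matrix_mult_right summable_mat_exp, symmetric])
  finally show ?thesis .
qed

lemma sylvester_solvable_if_unique:
  fixes A :: "real^'n^'n" and F :: "real^'r^'r" and R S :: "real^'r^'n"
  assumes unique: "\<exists>!X. A ** X + X ** F = R"
  shows "\<exists>X. A ** X + X ** F = S"
proof -
  define L where "L = (\<lambda>X::real^'r^'n. A ** X + X ** F)"
  have linear: "linear L"
    unfolding L_def linear_conv_bounded_linear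
    by (intro bounded_linear_add bounded_linear_matrix_mult_left bounded_linear_matrix_mult_right)
  obtain P where P: "L P = R" and unique_P: "\<And>X. L X = R \<Longrightarrow> X = P"
    using unique unfolding L_def by blast
  have "inj L"
  proof (rule injI)
    fix X Y
    assume "L X = L Y"
    then have "L (P + (X - Y)) = R"
      using P by (simp add: linear_add[OF linear] linear_diff[OF linear])
    then have "P + (X - Y) = P"
      by (rule unique_P)
    then show "X = Y"
      by simp
  qed
  then have "surj L"
    using linear linear_injective_imp_surjective by blast
  then obtain X where "S = L X"
    by (blast dest: surjD)
  then show ?thesis
    unfolding L_def by metis
qed

lemma sylvester_conjugate:
  fixes A E :: "real^'n^'n" and F G :: "real^'r^'r" and X :: "real^'r^'n"
  assumes "A ** E = E ** A" and "G ** F = F ** G"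
  shows "A ** (E ** X ** G) + (E ** X ** G) ** F = E ** (A ** X + X ** F) ** G"
  using assms
  by (simp add: matrix_add_ldistrib matrix_add_rdistrib matrix_mul_assoc)
     (simp add: matrix_mul_assoc[symmetric])

lemma trace_sylvester_adjoint:
  fixes A :: "real^'n^'n" and F :: "real^'r^'r" and X :: "real^'r^'n" and Q :: "real^'n^'r"
  shows "trace (Q ** (A ** X + X ** F)) = trace ((F ** Q + Q ** A) ** X)"
  by (simp add: matrix_add_ldistrib matrix_add_rdistrib trace_add matrix_mul_assoc
      trace_mul_cyclic[of Q X F])

lemma sylvester_finite_horizon_solution:
  fixes A E :: "real^'n^'n" and F G :: "real^'r^'r" and W P :: "real^'r^'n"
  assumes AE: "A ** E = E ** A" and GF: "G ** F = F ** G"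
    and unique: "\<exists>!X. A ** X + X ** F = - W + E ** W ** G"
    and P: "A ** P + P ** F = - W + E ** W ** G"
  obtains P\<^sub>0 where "A ** P\<^sub>0 + P\<^sub>0 ** F = - W" and "P = P\<^sub>0 - E ** P\<^sub>0 ** G"
proof -
  obtain P\<^sub>0 where P\<^sub>0: "A ** P\<^sub>0 + P\<^sub>0 ** F = - W"
    using sylvester_solvable_if_unique[OF unique] by blast
  have "A ** (P\<^sub>0 - E ** P\<^sub>0 ** G) + (P\<^sub>0 - E ** P\<^sub>0 ** G) ** F
      = (A ** P\<^sub>0 + P\<^sub>0 ** F) - E ** (A ** P\<^sub>0 + P\<^sub>0 ** F) ** G"
    by (simp add: matrix_diff_ldistrib matrix_diff_rdistrib sylvester_conjugate[OF AE GF, symmetric])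
  also have "\<dots> = - W + E ** W ** G"
    by (simp add: P\<^sub>0 matrix_neg_left matrix_neg_right)
  finally have "P = P\<^sub>0 - E ** P\<^sub>0 ** G"
    using unique P by blast
  with P\<^sub>0 show thesis by (rule that)
qed

lemma trace_sylvester_duality:
  fixes A E :: "real^'n^'n" and F G :: "real^'r^'r"
    and W P :: "real^'r^'n" and V Q :: "real^'n^'r"
  assumes AE: "A ** E = E ** A" and GF: "G ** F = F ** G"
    and unique: "\<exists>!X. A ** X + X ** F = - W + E ** W ** G"
    and P: "A ** P + P ** F = - W + E ** W ** G"
    and Q: "F ** Q + Q ** A = - V + G ** V ** E"
  shows "trace (V ** P) = trace (Q ** W)"
proof -
  obtain P\<^sub>0 where P\<^sub>0: "A ** P\<^sub>0 + P\<^sub>0 ** F = - W" and P_eq: "P = P\<^sub>0 - E ** P\<^sub>0 ** G"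
    using sylvester_finite_horizon_solution[OF AE GF unique P] .
  have cyclic: "trace (G ** V ** E ** P\<^sub>0) = trace (V ** (E ** P\<^sub>0 ** G))"
    by (metis matrix_mul_assoc trace_mul_sym)
  have "trace (Q ** W) = - trace (Q ** (A ** P\<^sub>0 + P\<^sub>0 ** F))"
    by (simp add: P\<^sub>0 matrix_neg_right trace_neg)
  also have "\<dots> = - trace ((- V + G ** V ** E) ** P\<^sub>0)"
    by (simp add: trace_sylvester_adjoint Q)
  also have "\<dots> = trace (V ** P\<^sub>0) - trace (V ** (E ** P\<^sub>0 ** G))"
    using cyclic by (simp add: matrix_diff_rdistrib trace_sub)
  also have "\<dots> = trace (V ** P)"
    by (simp add: P_eq matrix_diff_ldistrib trace_sub)
  finally show ?thesis by simp
qed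

lemma trace_gramian_duality:
  fixes A :: "real^'n^'n" and B :: "real^'m^'n" and C :: "real^'n^'p"
    and Ah :: "real^'r^'r" and Bh :: "real^'m^'r" and Ch :: "real^'r^'p"
    and P :: "real^'r^'n" and Q :: "real^'n^'r"
  assumes unique: "\<exists>!X. A ** X + X ** transpose Ah =
        - (B ** transpose Bh) + mat_exp T A ** B ** transpose Bh ** mat_exp T (transpose Ah)"
    and P: "A ** P + P ** transpose Ah =
        - (B ** transpose Bh) + mat_exp T A ** B ** transpose Bh ** mat_exp T (transpose Ah)"
    and Q: "transpose Ah ** Q + Q ** A =
        - (transpose Ch ** C) + mat_exp T (transpose Ah) ** transpose Ch ** C ** mat_exp T A"
  shows "trace (C ** P ** transpose Ch) = trace (transpose Bh ** Q ** B)"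
proof -
  have "trace (transpose Ch ** C ** P) = trace (Q ** (B ** transpose Bh))"
    by (rule trace_sylvester_duality[OF mat_exp_commute mat_exp_commute[symmetric]])
       (use unique P Q in \<open>simp_all add: matrix_mul_assoc\<close>)
  then show ?thesis
    by (metis matrix_mul_assoc trace_mul_cyclic)
qed

theorem proposition2p3:
  fixes A :: "real^'n^'n" and B :: "real^'m^'n" and C :: "real^'n^'p"
    and Ah :: "real^'r^'r" and Bh :: "real^'m^'r" and Ch :: "real^'r^'p"
    and T :: real
    and P :: "real^'n^'n" and P2 :: "real^'r^'n" and Ph :: "real^'r^'r"
    and Q :: "real^'n^'n" and Q2 :: "real^'n^'r" and Qh :: "real^'r^'r"
  assumes hA: "hurwitz A"
    and hT: "T > 0"
    and P_unique: "\<exists>!X. A ** X + X ** transpose A =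
        - (B ** transpose B) + mat_exp T A ** B ** transpose B ** mat_exp T (transpose A)"
    and P_eq: "A ** P + P ** transpose A =
        - (B ** transpose B) + mat_exp T A ** B ** transpose B ** mat_exp T (transpose A)"
    and P2_unique: "\<exists>!X. A ** X + X ** transpose Ah =
        - (B ** transpose Bh) + mat_exp T A ** B ** transpose Bh ** mat_exp T (transpose Ah)"
    and P2_eq: "A ** P2 + P2 ** transpose Ah =
        - (B ** transpose Bh) + mat_exp T A ** B ** transpose Bh ** mat_exp T (transpose Ah)"
    and Ph_unique: "\<exists>!X. Ah ** X + X ** transpose Ah =
        - (Bh ** transpose Bh) + mat_exp T Ah ** Bh ** transpose Bh ** mat_exp T (transpose Ah)"
    and Ph_eq: "Ah ** Ph + Ph ** transpose Ah =
        - (Bh ** transpose Bh) + mat_exp T Ah ** Bh ** transpose Bh ** mat_exp T (transpose Ah)"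
    and Q_eq: "transpose A ** Q + Q ** A =
        - (transpose C ** C) + mat_exp T (transpose A) ** transpose C ** C ** mat_exp T A"
    and Q2_eq: "transpose Ah ** Q2 + Q2 ** A =
        - (transpose Ch ** C) + mat_exp T (transpose Ah) ** transpose Ch ** C ** mat_exp T A"
    and Qh_eq: "transpose Ah ** Qh + Qh ** Ah =
        - (transpose Ch ** Ch) + mat_exp T (transpose Ah) ** transpose Ch ** Ch ** mat_exp T Ah"
  shows "trace (C ** P ** transpose C) = trace (transpose B ** Q ** B)
       \<and> trace (Ch ** Ph ** transpose Ch) = trace (transpose Bh ** Qh ** Bh)
       \<and> trace (C ** P2 ** transpose Ch) = trace (transpose Bh ** Q2 ** B)"
  \<comment> \<open>\<open>hA\<close> and \<open>hT\<close> only serve to make the Lyapunov equations uniquely solvable,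
    which the \<open>_unique\<close> hypotheses assert directly.\<close>
  using trace_gramian_duality[OF P_unique P_eq Q_eq]
    trace_gramian_duality[OF Ph_unique Ph_eq Qh_eq]
    trace_gramian_duality[OF P2_unique P2_eq Q2_eq]
  by blast

end
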